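(* Suppose $t=t(n)=\alpha_0(n)+O(1)$ is an integer. Then, uniformly over all $n$ and all real $\rho\ge2$ with $t-\rho=\Theta(1)$, \[ y_t(\rho)=2\log n-\log\log n+O(1). \]
   Context: $\alpha_0(n)=2\log_2 n-2\log_2\log_2 n+2\log_2(e/2)+1$. $d_i=2^{\binom i2}i!$. For positive integer $t$ and real $1<\rho<t$, $x_t(\rho),y_t(\rho)$ are the unique reals $x,y$ with $\sum_{i=1}^t e^{x+iy}d_i^{-1}=1$ and $\sum_{i=1}^t ie^{x+iy}d_i^{-1}=\rho$. Logarithms are natural. *)

theory Defs
  imports "HOL-Analysis.Analysis"
begin

definition alpha0 :: "nat \<Rightarrow> real" where
  "alpha0 n = 2 * log 2 (real n) - 2 * log 2 (log 2 (real n)) + 2 * log 2 (exp 1 / 2) + 1"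

definition dd :: "nat \<Rightarrow> real" where
  "dd i = 2 ^ (i choose 2) * fact i"

definition xy :: "nat \<Rightarrow> real \<Rightarrow> real \<times> real" where
  "xy t \<rho> = (THE p. (\<Sum>i=1..t. exp (fst p + real i * snd p) / dd i) = 1
                  \<and> (\<Sum>i=1..t. real i * exp (fst p + real i * snd p) / dd i) = \<rho>)"

definition x_t :: "nat \<Rightarrow> real \<Rightarrow> real" where "x_t t \<rho> = fst (xy t \<rho>)"
definition y_t :: "nat \<Rightarrow> real \<Rightarrow> real" where "y_t t \<rho> = snd (xy t \<rho>)"

end

theory Submission
  imports Defs "HOL-Real_Asymp.Real_Asymp"
begin

(* The equations defining (x_t(rho), y_t(rho)) say that rho is the mean of the index i under
   the weights e^(iy)/d_i and that e^(-x) is their total mass.  This tilted mean increases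
   strictly from 1 to t as y runs over the reals, so y_t(rho) is well defined.  Consecutive weights
   have ratio e^y/(2^i (i+1)), so near the top index everything is governed by
   R = e^y/(2^(t-1) t).  If R is large, the weights decay geometrically below t and the mean is
   within O(1/R) of t; if R is tiny, the weights above t - K are negligible and the mean lies at
   least K/2 below t.  Since t - rho is bounded above and below, R = Theta(1), that is
   y = (t-1) log 2 + log t + O(1), and t = alpha_0(n) + O(1) turns this into
   2 log n - log log n + O(1). *)

lemma exp_rearrangement_nonneg:
  fixes p q y y' :: real
  assumes "y \<le> y'"
  shows "0 \<le> (p - q) * (exp (p * y' + q * y) - exp (q * y' + p * y))"
proof (cases "p \<le> q")
  case True
  then have "p * (y' - y) \<le> q * (y' - y)"
    using assms by (intro mult_right_mono) auto
  then show ?thesis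
    using True by (intro mult_nonpos_nonpos) (auto simp: algebra_simps)
next
  case False
  then have "q * (y' - y) \<le> p * (y' - y)"
    using assms by (intro mult_right_mono) auto
  then show ?thesis
    using False by (intro mult_nonneg_nonneg) (auto simp: algebra_simps)
qed

lemma double_sum_cross_difference:
  fixes a b :: "nat \<Rightarrow> real"
  shows "(\<Sum>i\<in>I. \<Sum>j\<in>I. (real i - real j) * (a i * b j - a j * b i))
    = 2 * ((\<Sum>i\<in>I. real i * a i) * (\<Sum>j\<in>I. b j) - (\<Sum>j\<in>I. real j * b j) * (\<Sum>i\<in>I. a i))"
proof -
  define F where "F i j = (real i - real j) * (a i * b j)" for i j
  have "(\<Sum>i\<in>I. \<Sum>j\<in>I. (real i - real j) * (a i * b j - a j * b i))
      = (\<Sum>i\<in>I. \<Sum>j\<in>I. F i j) + (\<Sum>i\<in>I. \<Sum>j\<in>I. F j i)"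
    unfolding F_def by (simp add: sum.distrib[symmetric] algebra_simps)
  also have "(\<Sum>i\<in>I. \<Sum>j\<in>I. F j i) = (\<Sum>i\<in>I. \<Sum>j\<in>I. F i j)"
    by (rule sum.swap)
  also have "(\<Sum>i\<in>I. \<Sum>j\<in>I. F i j)
      = (\<Sum>i\<in>I. real i * a i) * (\<Sum>j\<in>I. b j) - (\<Sum>j\<in>I. real j * b j) * (\<Sum>i\<in>I. a i)"
    unfolding F_def sum_product
    by (subst (2) sum.swap) (simp add: sum_subtractf[symmetric] algebra_simps)
  finally show ?thesis
    by simp
qed

lemma sum_of_nat_mult_power_le:
  fixes r :: real
  assumes "0 \<le> r" "r \<le> 1/2"
  shows "(\<Sum>k<m. real k * r ^ k) \<le> 4 * r"
proof -
  have sums: "(\<lambda>n. real (Suc n) * r ^ n) sums (1 / (1 - r)\<^sup>2)"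
    by (rule geometric_deriv_sums) (use assms in auto)
  have "(\<Sum>k<m. real k * r ^ k) \<le> (\<Sum>k<Suc m. real k * r ^ k)"
    using assms by simp
  also have "\<dots> = r * (\<Sum>n<m. real (Suc n) * r ^ n)"
    unfolding sum.lessThan_Suc_shift by (simp add: sum_distrib_left mult_ac)
  also have "\<dots> \<le> r * (1 / (1 - r)\<^sup>2)"
    using sums_unique[OF sums] sums_summable[OF sums] assms
    by (intro mult_left_mono) (auto intro!: sum_le_suminf)
  also have "\<dots> \<le> r * 4"
  proof -
    have "1 / (1 - r) \<le> 2"
      using assms by (simp add: divide_le_eq)
    then have "(1 / (1 - r))\<^sup>2 \<le> 2\<^sup>2"
      using assms by (intro power_mono) auto
    then show ?thesis
      using assms by (intro mult_left_mono) (simp_all add: power_divide)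
  qed
  finally show ?thesis by simp
qed

lemma geometric_chain:
  fixes f :: "nat \<Rightarrow> real"
  assumes "\<And>i. a \<le> i \<Longrightarrow> i < a + n \<Longrightarrow> f (Suc i) \<le> c * f i" "0 \<le> c"
  shows "f (a + n) \<le> c ^ n * f a"
  using assms(1)
proof (induction n)
  case (Suc n)
  then have "f (a + Suc n) \<le> c * f (a + n)" by simp
  also have "\<dots> \<le> c * (c ^ n * f a)"
    using Suc assms(2) by (intro mult_left_mono) auto
  finally show ?case by simp
qed simp

section \<open>Exponential tilting of an index distribution\<close>

locale exp_tilting =
  fixes d :: "nat \<Rightarrow> real"
  assumes d_pos: "0 < d i"
begin

definition tilted_weight :: "real \<Rightarrow> nat \<Rightarrow> real" where
  "tilted_weight y i = exp (real i * y) / d i"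

definition partition_fn :: "nat \<Rightarrow> real \<Rightarrow> real" where
  "partition_fn t y = (\<Sum>i=1..t. tilted_weight y i)"

definition tilted_mean :: "nat \<Rightarrow> real \<Rightarrow> real" where
  "tilted_mean t y = (\<Sum>i=1..t. real i * tilted_weight y i) / partition_fn t y"

lemma d_ne_0: "d i \<noteq> 0"
  using d_pos[of i] by simp

lemma tilted_weight_pos: "0 < tilted_weight y i"
  unfolding tilted_weight_def using d_pos[of i] by simp

lemma partition_fn_pos:
  assumes "1 \<le> t"
  shows "0 < partition_fn t y"
  unfolding partition_fn_def using assms tilted_weight_pos
  by (intro sum_pos2[where i=1]) (auto intro: less_imp_le)

lemma continuous_on_tilted_mean:
  assumes "1 \<le> t"
  shows "continuous_on A (tilted_mean t)"
proof -
  have "partition_fn t y \<noteq> 0" for y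
    using partition_fn_pos[OF assms] by (simp add: less_imp_neq[symmetric])
  then show ?thesis
    unfolding tilted_mean_def partition_fn_def tilted_weight_def
    by (auto intro!: continuous_intros simp: d_ne_0)
qed

lemma tilted_mean_strict_mono:
  assumes t: "2 \<le> t"
  shows "strict_mono (tilted_mean t)"
proof
  fix y y' :: real
  assume "y < y'"
  define a where "a = tilted_weight y'"
  define b where "b = tilted_weight y"
  define T where "T i j = (real i - real j) * (a i * b j - a j * b i)" for i j
  have T_eq: "T i j = (real i - real j)
      * (exp (real i * y' + real j * y) - exp (real j * y' + real i * y)) / (d i * d j)" for i j
    unfolding T_def a_def b_def tilted_weight_def using d_pos[of i] d_pos[of j]
    by (simp add: exp_add field_simps)
  have "0 \<le> T i j" for i j
    unfolding T_eq using exp_rearrangement_nonneg[of y y'] \<open>y < y'\<close> d_pos[of i] d_pos[of j]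
    by simp
  moreover have "0 < T 2 1"
    unfolding T_eq using d_pos[of 1] d_pos[of 2] \<open>y < y'\<close> by simp
  ultimately have "0 < (\<Sum>i=1..t. \<Sum>j=1..t. T i j)"
    using t by (intro sum_pos2[where i=2] sum_pos2[where i=1] sum_nonneg) auto
  then have "(\<Sum>j=1..t. real j * b j) * (\<Sum>i=1..t. a i)
      < (\<Sum>i=1..t. real i * a i) * (\<Sum>j=1..t. b j)"
    unfolding T_def double_sum_cross_difference by simp
  moreover have "0 < partition_fn t y" "0 < partition_fn t y'"
    using partition_fn_pos t by auto
  ultimately show "tilted_mean t y < tilted_mean t y'"
    unfolding tilted_mean_def by (simp add: partition_fn_def a_def b_def field_simps)
qed

lemma tilted_mean_at_bot:
  assumes t: "1 \<le> t"
  shows "(tilted_mean t \<longlongrightarrow> 1) at_bot"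
proof -
  define g where "g u = (\<Sum>i=1..t. real i * u ^ (i - 1) / d i) / (\<Sum>i=1..t. u ^ (i - 1) / d i)"
    for u :: real
  have at_0: "(\<Sum>i=1..t. f i * (0::real) ^ (i - 1) / d i) = f 1 / d 1" for f
    using t by (subst sum.cong[OF refl, where h="\<lambda>i. if i = 1 then f i / d i else 0"]) auto
  have "isCont g 0"
    unfolding g_def using at_0[of "\<lambda>_. 1"] d_ne_0 by (intro continuous_intros) auto
  moreover have "g 0 = 1"
    unfolding g_def using at_0[of "\<lambda>_. 1"] at_0[of real] d_pos[of 1] by simp
  moreover have "tilted_mean t = (\<lambda>y. g (exp y))"
  proof
    fix y
    have "(\<Sum>i=1..t. f i * u ^ i / d i) = u * (\<Sum>i=1..t. f i * u ^ (i - 1) / d i)" for f and u :: real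
      unfolding sum_distrib_left by (intro sum.cong refl) (auto simp: power_eq_if)
    from this[of "\<lambda>_. 1"] this[of real] show "tilted_mean t y = g (exp y)"
      unfolding tilted_mean_def partition_fn_def tilted_weight_def g_def exp_of_nat_mult by simp
  qed
  ultimately show ?thesis
    using isCont_tendsto_compose[where g=g and l=0, OF _ exp_at_bot] by simp
qed

lemma tilted_mean_at_top:
  assumes t: "1 \<le> t"
  shows "(tilted_mean t \<longlongrightarrow> real t) at_top"
proof -
  define g where "g v = (\<Sum>i=1..t. real i * v ^ (t - i) / d i) / (\<Sum>i=1..t. v ^ (t - i) / d i)"
    for v :: real
  have at_0: "(\<Sum>i=1..t. f i * (0::real) ^ (t - i) / d i) = f t / d t" for f
    using t by (subst sum.cong[OF refl, where h="\<lambda>i. if i = t then f i / d i else 0"]) auto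
  have "isCont g 0"
    unfolding g_def using at_0[of "\<lambda>_. 1"] d_ne_0 by (intro continuous_intros) auto
  moreover have "g 0 = real t"
    unfolding g_def using at_0[of "\<lambda>_. 1"] at_0[of real] d_pos[of t] by simp
  moreover have "tilted_mean t = (\<lambda>y. g (exp (- y)))"
  proof
    fix y
    have "(\<Sum>i=1..t. f i * u ^ i / d i) = u ^ t * (\<Sum>i=1..t. f i * inverse u ^ (t - i) / d i)"
      if "u \<noteq> 0" for f and u :: real
      unfolding sum_distrib_left
      by (intro sum.cong refl) (auto simp: that power_diff power_inverse)
    from this[of "exp y" "\<lambda>_. 1"] this[of "exp y" real] show "tilted_mean t y = g (exp (- y))"
      unfolding tilted_mean_def partition_fn_def tilted_weight_def g_def exp_of_nat_mult exp_minus
      by simp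
  qed
  moreover have "((\<lambda>y::real. exp (- y)) \<longlongrightarrow> 0) at_top"
    by real_asymp
  ultimately show ?thesis
    using isCont_tendsto_compose[where g=g and f="\<lambda>y. exp (- y)" and l=0 and F=at_top] by simp
qed

lemma tilted_mean_eq_ex1:
  assumes t: "2 \<le> t" and \<rho>: "1 < \<rho>" "\<rho> < real t"
  shows "\<exists>!y. tilted_mean t y = \<rho>"
proof (rule ex_ex1I)
  from t have "1 \<le> t" by simp
  obtain a where a: "tilted_mean t a < \<rho>"
    using order_tendstoD(2)[OF tilted_mean_at_bot[OF \<open>1 \<le> t\<close>] \<rho>(1)]
    by (auto simp: eventually_at_bot_linorder)
  obtain N where N: "\<And>y. N \<le> y \<Longrightarrow> \<rho> < tilted_mean t y"
    using order_tendstoD(1)[OF tilted_mean_at_top[OF \<open>1 \<le> t\<close>] \<rho>(2)]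
    by (auto simp: eventually_at_top_linorder)
  have "tilted_mean t a \<le> \<rho>" "\<rho> \<le> tilted_mean t (max a N)" "a \<le> max a N"
    using a N[of "max a N"] by auto
  with continuous_on_tilted_mean[OF \<open>1 \<le> t\<close>] show "\<exists>y. tilted_mean t y = \<rho>"
    using IVT' by blast
next
  show "y = y'" if "tilted_mean t y = \<rho>" "tilted_mean t y' = \<rho>" for y y'
    using strict_mono_imp_inj_on[OF tilted_mean_strict_mono[OF t]] that
    by (auto dest: inj_onD)
qed

lemma tilted_equations_iff:
  assumes t: "1 \<le> t"
  shows "(\<Sum>i=1..t. exp (x + real i * y) / d i) = 1
           \<and> (\<Sum>i=1..t. real i * exp (x + real i * y) / d i) = \<rho>
         \<longleftrightarrow> x = - ln (partition_fn t y) \<and> tilted_mean t y = \<rho>"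
proof -
  have Z: "(\<Sum>i=1..t. exp (x + real i * y) / d i) = exp x * partition_fn t y"
    unfolding partition_fn_def tilted_weight_def sum_distrib_left by (simp add: exp_add)
  have M: "(\<Sum>i=1..t. real i * exp (x + real i * y) / d i)
      = exp x * partition_fn t y * tilted_mean t y"
  proof -
    have "(\<Sum>i=1..t. real i * exp (x + real i * y) / d i)
        = exp x * (\<Sum>i=1..t. real i * exp (real i * y) / d i)"
      by (simp add: exp_add sum_distrib_left mult_ac)
    then show ?thesis
      using partition_fn_pos[OF t, of y] unfolding tilted_mean_def tilted_weight_def by simp
  qed
  have "exp x * partition_fn t y = 1 \<longleftrightarrow> x = - ln (partition_fn t y)"
  proof -
    have "exp (- ln (partition_fn t y)) = 1 / partition_fn t y"
      using partition_fn_pos[OF t, of y] by (simp add: exp_minus inverse_eq_divide)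
    then show ?thesis
      using partition_fn_pos[OF t, of y] by (metis eq_divide_eq exp_inj_iff less_irrefl)
  qed
  then show ?thesis
    unfolding Z M by auto
qed

lemma sum_deviation_tilted_weight:
  assumes "1 \<le> t" "tilted_mean t y = \<rho>"
  shows "(\<Sum>i=1..t. (c - real i) * tilted_weight y i) = (c - \<rho>) * partition_fn t y"
proof -
  have "(\<Sum>i=1..t. real i * tilted_weight y i) = \<rho> * partition_fn t y"
    using assms partition_fn_pos[of t y] unfolding tilted_mean_def by (simp add: field_simps)
  then show ?thesis
    unfolding partition_fn_def by (simp add: left_diff_distrib sum_subtractf sum_distrib_left)
qed

lemma half_mass_imp_mean_gap_ge:
  assumes a: "1 \<le> a" "a \<le> t" and mean: "tilted_mean t y = \<rho>"
    and half: "(\<Sum>i=a+1..t. tilted_weight y i) \<le> (\<Sum>i=1..a. tilted_weight y i)"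
  shows "real (t - a) \<le> 2 * (real t - \<rho>)"
proof -
  define A where "A = (\<Sum>i=1..a. tilted_weight y i)"
  define B where "B = (\<Sum>i=a+1..t. tilted_weight y i)"
  have split: "(\<Sum>i=1..t. f i) = (\<Sum>i=1..a. f i) + (\<Sum>i=a+1..t. f i)" for f :: "nat \<Rightarrow> real"
    using sum.ub_add_nat[of 1 a f "t - a"] a by simp
  have "0 < A"
    unfolding A_def using a tilted_weight_pos
    by (intro sum_pos2[where i=1]) (auto intro: less_imp_le)
  have "0 \<le> B"
    unfolding B_def using tilted_weight_pos by (intro sum_nonneg) (auto intro: less_imp_le)
  have "real (t - a) * A \<le> (\<Sum>i=1..a. (real t - real i) * tilted_weight y i)"
    unfolding A_def sum_distrib_left using a tilted_weight_pos
    by (intro sum_mono mult_right_mono) (auto intro: less_imp_le)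
  also have "\<dots> \<le> (\<Sum>i=1..t. (real t - real i) * tilted_weight y i)"
    unfolding split[of "\<lambda>i. (real t - real i) * tilted_weight y i"] using tilted_weight_pos
    by (simp, intro sum_nonneg mult_nonneg_nonneg) (auto intro: less_imp_le)
  also have "\<dots> = (real t - \<rho>) * (A + B)"
    using sum_deviation_tilted_weight[of t y \<rho> "real t"] mean a
    unfolding partition_fn_def split[of "tilted_weight y"] A_def B_def by simp
  finally have le: "real (t - a) * A \<le> (real t - \<rho>) * (A + B)" .
  then have "0 \<le> real t - \<rho>"
    using \<open>0 < A\<close> \<open>0 \<le> B\<close> by (smt (verit) mult_nonneg_nonneg mult_neg_pos of_nat_0_le_iff)
  then have "(real t - \<rho>) * (A + B) \<le> (real t - \<rho>) * (2 * A)"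
    using half unfolding A_def B_def by (intro mult_left_mono) auto
  with le have "real (t - a) * A \<le> (2 * (real t - \<rho>)) * A"
    by (simp add: mult_ac)
  then show ?thesis
    using \<open>0 < A\<close> by simp
qed

end

section \<open>Tilting by the weights d_i\<close>

interpretation dd: exp_tilting dd
  by unfold_locales (simp add: dd_def)

lemma tilted_mean_y_t:
  assumes t: "2 \<le> t" and \<rho>: "1 < \<rho>" "\<rho> < real t"
  shows "dd.tilted_mean t (y_t t \<rho>) = \<rho>"
proof -
  define P where "P p \<longleftrightarrow> (\<Sum>i=1..t. exp (fst p + real i * snd p) / dd i) = 1
      \<and> (\<Sum>i=1..t. real i * exp (fst p + real i * snd p) / dd i) = \<rho>" for p
  have P_iff: "P p \<longleftrightarrow>
      fst p = - ln (dd.partition_fn t (snd p)) \<and> dd.tilted_mean t (snd p) = \<rho>" for p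
    unfolding P_def using dd.tilted_equations_iff t by simp
  have "\<exists>!p. P p"
    unfolding P_iff using dd.tilted_mean_eq_ex1[OF t \<rho>] by (metis fst_conv snd_conv prod.collapse)
  then have "P (xy t \<rho>)"
    unfolding xy_def P_def[abs_def] by (rule theI')
  then show ?thesis
    unfolding P_iff y_t_def by simp
qed

lemma dd_Suc: "dd (Suc i) = dd i * (2 ^ i * (real i + 1))"
proof -
  have "Suc i choose 2 = (i choose 2) + i"
    by (simp add: numeral_2_eq_2)
  then show ?thesis
    unfolding dd_def by (simp add: power_add algebra_simps)
qed

lemma dd_tilted_weight_Suc:
  "dd.tilted_weight y (Suc i) = dd.tilted_weight y i * (exp y / (2 ^ i * (real i + 1)))"
  unfolding dd.tilted_weight_def dd_Suc using dd.d_pos[of i]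
  by (simp add: field_simps exp_add[symmetric] distrib_right)

text \<open>The ratio \<open>(e^(t y)/d_t) / (e^((t-1) y)/d_(t-1))\<close> of the last two tilted weights.\<close>

definition top_ratio :: "nat \<Rightarrow> real \<Rightarrow> real" where
  "top_ratio t y = exp y / (2 ^ (t - 1) * real t)"

lemma top_ratio_pos: "1 \<le> t \<Longrightarrow> 0 < top_ratio t y"
  unfolding top_ratio_def by simp

lemma dd_tilted_weight_Suc_ge:
  assumes "i < t"
  shows "top_ratio t y * dd.tilted_weight y i \<le> dd.tilted_weight y (Suc i)"
proof -
  have "(2::real) ^ i * (real i + 1) \<le> 2 ^ (t - 1) * real t"
    using assms by (intro mult_mono power_increasing) auto
  then have "top_ratio t y \<le> exp y / (2 ^ i * (real i + 1))"
    unfolding top_ratio_def using assms by (intro divide_left_mono) auto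
  then have "top_ratio t y * dd.tilted_weight y i
      \<le> exp y / (2 ^ i * (real i + 1)) * dd.tilted_weight y i"
    using dd.tilted_weight_pos[of y i] by (intro mult_right_mono) auto
  then show ?thesis
    unfolding dd_tilted_weight_Suc by (simp add: mult.commute)
qed

lemma dd_tilted_weight_Suc_le:
  assumes "1 \<le> K" "2 * K \<le> t" "t - K \<le> i"
  shows "dd.tilted_weight y (Suc i) \<le> top_ratio t y * 2 ^ (K + 1) * dd.tilted_weight y i"
proof -
  have "(2::real) ^ (t - 1) \<le> 2 ^ (K + i)" "real t \<le> 2 * (real i + 1)"
    using assms by (auto intro: power_increasing)
  then have "(2::real) ^ (t - 1) * real t \<le> 2 ^ (K + i) * (2 * (real i + 1))"
    by (intro mult_mono) auto
  also have "\<dots> = 2 ^ (K + 1) * (2 ^ i * (real i + 1))"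
    by (simp add: power_add algebra_simps)
  finally have "(2::real) ^ (t - 1) * real t \<le> 2 ^ (K + 1) * (2 ^ i * (real i + 1))" .
  then have "exp y * 2 ^ (K + 1) / (2 ^ (K + 1) * (2 ^ i * (real i + 1)))
      \<le> exp y * 2 ^ (K + 1) / (2 ^ (t - 1) * real t)"
    using assms by (intro divide_left_mono) auto
  then have "exp y / (2 ^ i * (real i + 1)) \<le> top_ratio t y * 2 ^ (K + 1)"
    unfolding top_ratio_def by simp
  then have "exp y / (2 ^ i * (real i + 1)) * dd.tilted_weight y i
      \<le> top_ratio t y * 2 ^ (K + 1) * dd.tilted_weight y i"
    using dd.tilted_weight_pos[of y i] by (intro mult_right_mono) auto
  then show ?thesis
    unfolding dd_tilted_weight_Suc by (simp add: mult.commute)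
qed

text \<open>If the top ratio \<open>R\<close> exceeds 2, the weights decay at least like \<open>R^(i-t)\<close> below
  the top index, so the mean lies within \<open>4/R\<close> of \<open>t\<close>.\<close>

lemma top_ratio_upper_bound:
  assumes t: "1 \<le> t" and \<rho>: "\<rho> < real t" and mean: "dd.tilted_mean t y = \<rho>"
  shows "top_ratio t y \<le> max 2 (4 / (real t - \<rho>))"
proof (cases "top_ratio t y \<le> 2")
  case False
  define W where "W = dd.tilted_weight y"
  define r where "r = 1 / top_ratio t y"
  have r: "0 \<le> r" "r \<le> 1/2"
    using False unfolding r_def by auto
  have W_pos: "0 < W i" for i
    unfolding W_def by (rule dd.tilted_weight_pos)
  have W_le: "W i \<le> r ^ (t - i) * W t" if "i \<le> t" for i
  proof -
    have "W (t - Suc j) \<le> r * W (t - j)" if "j < t" for j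
      using dd_tilted_weight_Suc_ge[of "t - Suc j" t y] that False
      unfolding W_def r_def by (simp add: Suc_diff_Suc field_simps)
    then have "W (t - (0 + (t - i))) \<le> r ^ (t - i) * W (t - 0)"
      using r by (intro geometric_chain[where f="\<lambda>j. W (t - j)"]) auto
    then show ?thesis
      using that by simp
  qed
  have "(real t - \<rho>) * dd.partition_fn t y = (\<Sum>i=1..t. (real t - real i) * W i)"
    using dd.sum_deviation_tilted_weight[OF t mean] by (simp add: W_def)
  also have "\<dots> \<le> (\<Sum>i=1..t. real (t - i) * r ^ (t - i)) * W t"
    unfolding sum_distrib_right using W_le
    by (intro sum_mono) (auto simp: of_nat_diff mult.assoc intro: mult_left_mono)
  also have "(\<Sum>i=1..t. real (t - i) * r ^ (t - i)) = (\<Sum>k<t. real k * r ^ k)"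
    by (rule sum.reindex_bij_witness[where i="\<lambda>k. t - k" and j="\<lambda>i. t - i"]) auto
  also have "(\<Sum>k<t. real k * r ^ k) * W t \<le> 4 * r * dd.partition_fn t y"
  proof (intro mult_mono)
    show "W t \<le> dd.partition_fn t y"
      unfolding dd.partition_fn_def W_def using t dd.tilted_weight_pos
      by (intro member_le_sum) (auto intro: less_imp_le)
  qed (use sum_of_nat_mult_power_le[OF r] r W_pos in \<open>auto intro: less_imp_le\<close>)
  finally have "real t - \<rho> \<le> 4 * r"
    using dd.partition_fn_pos[OF t, of y] by simp
  then have "top_ratio t y \<le> 4 / (real t - \<rho>)"
    using False \<rho> unfolding r_def by (simp add: field_simps)
  then show ?thesis
    by simp
qed simp

text \<open>If \<open>R\<close> is tiny, each weight above \<open>t - K\<close> is a small fraction of the weight at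
  \<open>t - K\<close>, so at least half of the mass sits at or below \<open>t - K\<close>.\<close>

lemma top_ratio_lower_bound:
  assumes K: "1 \<le> K" "2 * K \<le> t" and dev: "2 * (real t - \<rho>) < real K"
    and mean: "dd.tilted_mean t y = \<rho>"
  shows "1 / (real K * 2 ^ (K + 1)) \<le> top_ratio t y"
proof (rule ccontr)
  assume small: "\<not> 1 / (real K * 2 ^ (K + 1)) \<le> top_ratio t y"
  define W where "W = dd.tilted_weight y"
  define q where "q = top_ratio t y * 2 ^ (K + 1)"
  define a where "a = t - K"
  have a: "1 \<le> a" "a \<le> t" "t - a = K"
    using K unfolding a_def by auto
  have q: "0 \<le> q" "real K * q < 1"
    using small top_ratio_pos[of t y] K unfolding q_def by (auto simp: field_simps)
  then have "q \<le> 1"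
    using K by (smt (verit) mult_le_cancel_right1 of_nat_1 of_nat_le_iff)
  have W_pos: "0 < W i" for i
    unfolding W_def by (rule dd.tilted_weight_pos)
  have W_tail: "W i \<le> q * W a" if "a < i" "i \<le> t" for i
  proof -
    have "W (a + (i - a)) \<le> q ^ (i - a) * W a"
      using dd_tilted_weight_Suc_le[OF K] q(1) unfolding W_def q_def a_def
      by (intro geometric_chain) auto
    also have "\<dots> \<le> q * W a"
      using that q(1) \<open>q \<le> 1\<close> W_pos[of a]
      by (intro mult_right_mono) (auto intro: power_decreasing[where n=1, simplified])
    finally show ?thesis
      using that by simp
  qed
  have "(\<Sum>i=a+1..t. W i) \<le> real K * (q * W a)"
    using sum_mono[of "{a+1..t}" W "\<lambda>_. q * W a"] W_tail a by simp
  also have "\<dots> \<le> W a"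
    using q W_pos[of a] by (smt (verit) mult_le_cancel_right1 mult.assoc)
  also have "\<dots> \<le> (\<Sum>i=1..a. W i)"
    using a W_pos by (intro member_le_sum) (auto intro: less_imp_le)
  finally have "real K \<le> 2 * (real t - \<rho>)"
    using dd.half_mass_imp_mean_gap_ge[OF a(1,2) mean] a(3) unfolding W_def by simp
  with dev show False
    by simp
qed

lemma ln_top_ratio:
  assumes "1 \<le> t"
  shows "y = ln (top_ratio t y) + (real t - 1) * ln 2 + ln (real t)"
proof -
  have "ln (top_ratio t y) = y - ln (2 ^ (t - 1)) - ln (real t)"
    unfolding top_ratio_def using assms by (simp add: ln_div ln_mult)
  also have "ln ((2::real) ^ (t - 1)) = (real t - 1) * ln 2"
    using assms by (simp add: ln_realpow of_nat_diff)
  finally show ?thesis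
    by simp
qed

lemma y_t_near_log_scale:
  assumes K: "1 \<le> K" "2 * K \<le> t" and \<rho>: "1 < \<rho>" and c: "0 < c" "c \<le> real t - \<rho>"
    and dev: "2 * (real t - \<rho>) < real K"
  shows "\<bar>y_t t \<rho> - ((real t - 1) * ln 2 + ln (real t))\<bar>
           \<le> ln (real K * 2 ^ (K + 1)) + ln (max 2 (4 / c))"
proof -
  define y where "y = y_t t \<rho>"
  have t: "1 \<le> t" "2 \<le> t"
    using K by auto
  have mean: "dd.tilted_mean t y = \<rho>"
    unfolding y_def using tilted_mean_y_t[OF t(2) \<rho>] c by simp
  have R: "0 < top_ratio t y"
    using top_ratio_pos[OF t(1)] .
  have "top_ratio t y \<le> max 2 (4 / (real t - \<rho>))"
    using top_ratio_upper_bound[OF t(1) _ mean] c by simp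
  also have "\<dots> \<le> max 2 (4 / c)"
    using c by (intro max.mono divide_left_mono) auto
  finally have "ln (top_ratio t y) \<le> ln (max 2 (4 / c))"
    using R by simp
  moreover have "ln (1 / (real K * 2 ^ (K + 1))) \<le> ln (top_ratio t y)"
    using top_ratio_lower_bound[OF K dev mean] R K by (subst ln_le_cancel_iff) auto
  then have "- ln (real K * 2 ^ (K + 1)) \<le> ln (top_ratio t y)"
    using K by (simp add: ln_div)
  moreover have "1 \<le> real K * 2 ^ (K + 1)"
    using K mult_mono[of 1 "real K" 1 "2 ^ (K + 1)"] one_le_power[of "2::real" "K + 1"] by simp
  then have "0 \<le> ln (real K * 2 ^ (K + 1))" "0 \<le> ln (max 2 (4 / c))"
    by auto
  ultimately show ?thesis
    using ln_top_ratio[OF t(1), of y] unfolding y_def by linarith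
qed

section \<open>Asymptotics in n\<close>

lemma alpha0_mult_ln2:
  assumes "2 \<le> n"
  shows "alpha0 n * ln 2 = 2 * ln (real n) - 2 * ln (ln (real n)) + (2 * ln (ln 2) + 2 - ln 2)"
proof -
  have "0 < ln (real n)"
    using assms by simp
  then have "log 2 (log 2 (real n)) * ln 2 = ln (ln (real n)) - ln (ln 2)"
    by (simp add: log_def ln_div)
  moreover have "log 2 (real n) * ln 2 = ln (real n)" "log 2 (exp 1 / 2) * ln 2 = 1 - ln 2"
    by (simp_all add: log_def ln_div)
  ultimately show ?thesis
    unfolding alpha0_def by (simp add: algebra_simps)
qed

lemma filterlim_of_alpha0_bounded:
  assumes "\<forall>\<^sub>F n in sequentially. \<bar>real (t n) - alpha0 n\<bar> \<le> C"
  shows "filterlim t at_top sequentially"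
  unfolding filterlim_at_top
proof
  fix N
  have "filterlim alpha0 at_top sequentially"
    unfolding alpha0_def by real_asymp
  then have "\<forall>\<^sub>F n in sequentially. real N + C \<le> alpha0 n"
    by (simp add: filterlim_at_top)
  with assms show "\<forall>\<^sub>F n in sequentially. N \<le> t n"
    by eventually_elim auto
qed

lemma tendsto_div_ln_of_alpha0_bounded:
  assumes C: "\<forall>\<^sub>F n in sequentially. \<bar>real (t n) - alpha0 n\<bar> \<le> C"
  shows "((\<lambda>n. real (t n) / ln (real n)) \<longlongrightarrow> 2 / ln 2) sequentially"
proof -
  have "((\<lambda>n. alpha0 n / ln (real n)) \<longlongrightarrow> 2 / ln 2) sequentially"
    unfolding alpha0_def by real_asymp (simp add: divide_inverse)
  moreover have "((\<lambda>n. (real (t n) - alpha0 n) / ln (real n)) \<longlongrightarrow> 0) sequentially"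
  proof (rule Lim_null_comparison)
    show "\<forall>\<^sub>F n in sequentially. norm ((real (t n) - alpha0 n) / ln (real n)) \<le> C / ln (real n)"
      using C eventually_ge_at_top[of 2]
      by eventually_elim (simp add: abs_divide divide_right_mono)
    show "((\<lambda>n. C / ln (real n)) \<longlongrightarrow> 0) sequentially"
      by real_asymp
  qed
  ultimately show ?thesis
    using tendsto_add by (force simp: add_divide_distrib[symmetric])
qed

lemma log_scale_of_alpha0_bounded:
  assumes C: "\<forall>\<^sub>F n in sequentially. \<bar>real (t n) - alpha0 n\<bar> \<le> C"
  shows "\<exists>B. \<forall>\<^sub>F n in sequentially.
           \<bar>(real (t n) - 1) * ln 2 + ln (real (t n)) - (2 * ln (real n) - ln (ln (real n)))\<bar> \<le> B"
proof -
  define L where "L = ln (2 / ln (2::real))"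
  have "((\<lambda>n. ln (real (t n) / ln (real n))) \<longlongrightarrow> L) sequentially"
    unfolding L_def using tendsto_div_ln_of_alpha0_bounded[OF C] by (rule tendsto_ln) simp
  then have "\<forall>\<^sub>F n in sequentially. \<bar>ln (real (t n) / ln (real n)) - L\<bar> < 1"
    using tendstoD[of _ L sequentially 1] by (simp add: dist_real_def)
  moreover have "\<forall>\<^sub>F n in sequentially. 1 \<le> t n"
    using filterlim_of_alpha0_bounded[OF C] by (simp add: filterlim_at_top)
  ultimately have "\<forall>\<^sub>F n in sequentially.
      \<bar>(real (t n) - 1) * ln 2 + ln (real (t n)) - (2 * ln (real n) - ln (ln (real n)))\<bar>
        \<le> C * ln 2 + \<bar>2 * ln (ln 2) + 2 - 2 * ln 2 + L\<bar> + 1"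
    using C eventually_ge_at_top[of 2]
  proof eventually_elim
    case (elim n)
    have "ln (real (t n) / ln (real n)) = ln (real (t n)) - ln (ln (real n))"
      using elim by (simp add: ln_div)
    then have "(real (t n) - 1) * ln 2 + ln (real (t n)) - (2 * ln (real n) - ln (ln (real n)))
        = (real (t n) - alpha0 n) * ln 2 + (2 * ln (ln 2) + 2 - 2 * ln 2)
          + ln (real (t n) / ln (real n))"
      using alpha0_mult_ln2[of n] elim by (simp add: algebra_simps)
    moreover have "\<bar>(real (t n) - alpha0 n) * ln 2\<bar> \<le> C * ln 2"
      using elim by (simp add: abs_mult mult_right_mono)
    ultimately show ?case
      using elim by linarith
  qed
  then show ?thesis
    by blast
qed

lemma eventually_y_t_near_log_scale:
  assumes t: "filterlim t at_top sequentially" and "0 < c"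
  shows "\<exists>M. \<forall>\<^sub>F n in sequentially. \<forall>\<rho>.
           1 < \<rho> \<and> c \<le> real (t n) - \<rho> \<and> real (t n) - \<rho> \<le> c' \<longrightarrow>
           \<bar>y_t (t n) \<rho> - ((real (t n) - 1) * ln 2 + ln (real (t n)))\<bar> \<le> M"
proof -
  define K where "K = nat \<lceil>2 * \<bar>c'\<bar>\<rceil> + 1"
  have K: "1 \<le> K" "2 * \<bar>c'\<bar> < real K"
    unfolding K_def by linarith+
  have "\<forall>\<^sub>F n in sequentially. 2 * K \<le> t n"
    using t by (simp add: filterlim_at_top)
  then have "\<forall>\<^sub>F n in sequentially. \<forall>\<rho>.
      1 < \<rho> \<and> c \<le> real (t n) - \<rho> \<and> real (t n) - \<rho> \<le> c' \<longrightarrow>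
      \<bar>y_t (t n) \<rho> - ((real (t n) - 1) * ln 2 + ln (real (t n)))\<bar>
        \<le> ln (real K * 2 ^ (K + 1)) + ln (max 2 (4 / c))"
  proof eventually_elim
    case (elim n)
    then show ?case
      using K abs_ge_self[of c'] \<open>0 < c\<close> by (intro allI impI y_t_near_log_scale) auto
  qed
  then show ?thesis
    by blast
qed

theorem corollary38:
  fixes t :: "nat \<Rightarrow> nat"
  assumes "\<exists>C. \<forall>\<^sub>F n in sequentially. \<bar>real (t n) - alpha0 n\<bar> \<le> C"
  shows "\<forall>c1 c2. 0 < c1 \<longrightarrow> (\<exists>K. \<forall>\<^sub>F n in sequentially. \<forall>\<rho>::real.
            2 \<le> \<rho> \<and> c1 \<le> real (t n) - \<rho> \<and> real (t n) - \<rho> \<le> c2 \<longrightarrow>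
            \<bar>y_t (t n) \<rho> - (2 * ln (real n) - ln (ln (real n)))\<bar> \<le> K)"
proof (intro allI impI)
  fix c1 c2 :: real
  assume "0 < c1"
  obtain C where C: "\<forall>\<^sub>F n in sequentially. \<bar>real (t n) - alpha0 n\<bar> \<le> C"
    using assms by blast
  obtain B where B: "\<forall>\<^sub>F n in sequentially.
      \<bar>(real (t n) - 1) * ln 2 + ln (real (t n)) - (2 * ln (real n) - ln (ln (real n)))\<bar> \<le> B"
    using log_scale_of_alpha0_bounded[OF C] by blast
  obtain M where M: "\<forall>\<^sub>F n in sequentially. \<forall>\<rho>.
      1 < \<rho> \<and> c1 \<le> real (t n) - \<rho> \<and> real (t n) - \<rho> \<le> c2 \<longrightarrow>
      \<bar>y_t (t n) \<rho> - ((real (t n) - 1) * ln 2 + ln (real (t n)))\<bar> \<le> M"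
    using eventually_y_t_near_log_scale[OF filterlim_of_alpha0_bounded[OF C] \<open>0 < c1\<close>] by blast
  have "\<forall>\<^sub>F n in sequentially. \<forall>\<rho>::real.
      2 \<le> \<rho> \<and> c1 \<le> real (t n) - \<rho> \<and> real (t n) - \<rho> \<le> c2 \<longrightarrow>
      \<bar>y_t (t n) \<rho> - (2 * ln (real n) - ln (ln (real n)))\<bar> \<le> M + B"
    using B M by eventually_elim (smt (verit))
  then show "\<exists>K. \<forall>\<^sub>F n in sequentially. \<forall>\<rho>::real.
      2 \<le> \<rho> \<and> c1 \<le> real (t n) - \<rho> \<and> real (t n) - \<rho> \<le> c2 \<longrightarrow>
      \<bar>y_t (t n) \<rho> - (2 * ln (real n) - ln (ln (real n)))\<bar> \<le> K"
    by blast
qed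

end
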